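(* Let $q$ be a prime power, $e\in\{0,1,2\}$, $r$ an integer ($r$ odd if $e\in\{0,2\}$, $r$ even if $e=1$), $N=q^{\frac{r+e+1}{2}}$, and let $\{\Sigma_1,\dots,\Sigma_{N+1}\}$ be a spread of a non-degenerate quadric $\mathcal Q_{r+2,e}$ of ${\rm PG}(r+2,q)$ with associated polarity $\perp$. Fix a point $P\in\Sigma_{N+1}$ and an $r$-space $H\subset P^\perp$ with $P\notin H$. Put $\mathcal Q_{r,e}=H\cap\mathcal Q_{r+2,e}$ and $\Pi_i=\langle P,\Sigma_i\rangle\cap H$ for $i=1,\dots,N$. Then: (i) if $e\in\{1,2\}$, then for $i\neq j$ the subspaces $\Pi_i$ and $\Pi_j$ meet in at most one point; (ii) if $e=0$ and $r\equiv 1\pmod 4$, then for $i\neq j$ the subspaces $\Pi_i$ and $\Pi_j$ have exactly one point in common; (iii) each point of $\mathcal Q_{r,e}\setminus\Sigma_{N+1}$ lies in exactly $q$ of the subspaces $\Pi_1,\dots,\Pi_N$.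
   Context: Notation: $\mathcal Q_{m,e}$ denotes a non-degenerate quadric of ${\rm PG}(m,q)$ which is hyperbolic $\mathcal Q^+(m,q)$ if $e=0$ ($m$ odd), parabolic $\mathcal Q(m,q)$ if $e=1$ ($m$ even), elliptic $\mathcal Q^-(m,q)$ if $e=2$ ($m$ odd). The polarity $\perp$ associated with the quadric is the one defined by the polar form of the quadratic form; for a point $P$ of the quadric, $P^\perp$ is the tangent hyperplane at $P$. A generator of $\mathcal Q_{m,e}$ is a projective subspace of maximal dimension contained in it; generators are $\frac{m-e-1}{2}$-dimensional. A spread of $\mathcal Q_{m,e}$ is a set of $q^{\frac{m+e-1}{2}}+1$ pairwise disjoint generators. An $s$-space means an $s$-dimensional projective subspace. *)

theory Defs
  imports "HOL-Analysis.Analysis"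
begin

text \<open>Projective space PG(m,q) is modelled by the vector space 'a^'n over the
finite field 'a (q = CARD('a)), with CARD('n) = m+1. A projective s-space is a
linear subspace of vector dimension s+1; a point is a nonzero vector (up to scalars).\<close>

definition qform :: "'a::field^'n^'n \<Rightarrow> 'a^'n \<Rightarrow> 'a" where
  "qform c x = (\<Sum>i\<in>UNIV. \<Sum>j\<in>UNIV. c$i$j * x$i * x$j)"

definition polar :: "'a::field^'n^'n \<Rightarrow> 'a^'n \<Rightarrow> 'a^'n \<Rightarrow> 'a" where
  "polar c x y = qform c (x + y) - qform c x - qform c y"

definition nondegenerate :: "'a::field^'n^'n \<Rightarrow> bool" where
  "nondegenerate c \<longleftrightarrow>
     (\<forall>v. qform c v = 0 \<and> (\<forall>w. polar c v w = 0) \<longrightarrow> v = 0)"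

definition totally_singular :: "'a::field^'n^'n \<Rightarrow> ('a^'n) set \<Rightarrow> bool" where
  "totally_singular c W \<longleftrightarrow> vec.subspace W \<and> (\<forall>w\<in>W. qform c w = 0)"

definition generator :: "'a::field^'n^'n \<Rightarrow> ('a^'n) set \<Rightarrow> bool" where
  "generator c W \<longleftrightarrow> totally_singular c W \<and>
     (\<forall>U. totally_singular c U \<longrightarrow> vec.dim U \<le> vec.dim W)"

text \<open>The quadric Q(m,e) with CARD('n) = m+1: non-degenerate, generators of
projective dimension (m-e-1)/2, i.e. vector dimension (m+1-e)/2; e = 1 iff m even.\<close>
definition quadric_type :: "'a::field^'n^'n \<Rightarrow> nat \<Rightarrow> bool" where
  "quadric_type c e \<longleftrightarrow> nondegenerate c \<and> e \<in> {0,1,2} \<and>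
     (e = 1 \<longleftrightarrow> odd CARD('n)) \<and>
     (\<exists>W. generator c W \<and> 2 * vec.dim W = CARD('n) - e)"

definition spread :: "'a::field^'n^'n \<Rightarrow> nat \<Rightarrow> (nat \<Rightarrow> ('a^'n) set) \<Rightarrow> bool" where
  "spread c K S \<longleftrightarrow> (\<forall>i\<in>{1..K}. generator c (S i)) \<and>
     (\<forall>i\<in>{1..K}. \<forall>j\<in>{1..K}. i \<noteq> j \<longrightarrow> S i \<inter> S j = {0})"

end

theory Submission
  imports Defs
begin

text \<open>
Splitting off hyperbolic pairs shows that a nondegenerate quadratic form of Witt index g on
F_q^(2g+e) has exactly (q^(g+e-1) + 1)(q^g - 1) + 1 singular vectors, so the N + 1 pairwise
disjoint generators of a spread cover the quadric. For (iii), every point other than p of the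
line joining p to a point x of Q(r,e) outside Sigma_(N+1) is singular, hence lies in exactly one
Sigma_i with i \<le> N, and distinct points of the line lie in distinct Sigma_i; so x lies in
exactly q of the Pi_i. For (i), eliminating p between two points of Pi_i \<inter> Pi_j produces a
vector of Sigma_i \<inter> Sigma_j = 0, which forces the two points to coincide. For (ii), in the
hyperbolic case Sigma_i and Sigma_j are complementary; the Sigma_i-component of p is orthogonal
to p, so it lies in the tangent hyperplane <p, H>, and projecting it from p into H gives a
common point of Pi_i and Pi_j.
\<close>

lemma polar_eq_sum:
  "polar c x y = (\<Sum>i\<in>UNIV. \<Sum>j\<in>UNIV. c$i$j * (x$i * y$j + y$i * x$j))"
  unfolding polar_def qform_def by (simp add: sum_subtractf[symmetric] algebra_simps)

lemma polar_commute: "polar c x y = polar c y x"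
  unfolding polar_def by (simp add: add.commute)

lemma qform_add: "qform c (x + y) = qform c x + qform c y + polar c x y"
  unfolding polar_def by simp

lemma polar_add_right: "polar c x (y + z) = polar c x y + polar c x z"
  unfolding polar_eq_sum by (simp add: algebra_simps sum.distrib)

lemma polar_diff_right: "polar c x (y - z) = polar c x y - polar c x z"
  unfolding polar_eq_sum by (simp add: algebra_simps sum_subtractf)

lemma polar_scale_right: "polar c x (a *s y) = a * polar c x y"
  unfolding polar_eq_sum by (simp add: algebra_simps sum_distrib_left)

lemma polar_add_left: "polar c (x + y) z = polar c x z + polar c y z"
  by (metis polar_add_right polar_commute)

lemma polar_diff_left: "polar c (x - y) z = polar c x z - polar c y z"
  by (metis polar_diff_right polar_commute)

lemma polar_scale_left: "polar c (a *s x) y = a * polar c x y"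
  by (metis polar_scale_right polar_commute)

lemmas polar_linear =
  polar_add_right polar_diff_right polar_scale_right polar_add_left polar_diff_left polar_scale_left

lemma polar_0_right [simp]: "polar c x 0 = 0"
  unfolding polar_eq_sum by simp

lemma qform_0 [simp]: "qform c 0 = 0"
  unfolding qform_def by simp

lemma qform_scale: "qform c (a *s x) = a\<^sup>2 * qform c x"
  unfolding qform_def by (simp add: algebra_simps sum_distrib_left power2_eq_square)

lemma polar_self: "polar c x x = 2 * qform c x"
  unfolding polar_eq_sum qform_def by (simp add: algebra_simps sum_distrib_left sum.distrib)

lemma qform_diff: "qform c (x - y) = qform c x + qform c y - polar c x y"
proof -
  have "x - y = x + (-1) *s y"
    by (simp add: vec_eq_iff)
  then show ?thesis
    by (simp only: qform_add qform_scale polar_scale_right) simp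
qed

lemma subspace_polar_kernel: "vec.subspace {x. \<forall>a\<in>A. polar c a x = 0}"
  unfolding vec.subspace_def by (simp add: polar_linear)

lemma polar_totally_singular:
  assumes "totally_singular c W" "x \<in> W" "y \<in> W"
  shows "polar c x y = 0"
  using assms unfolding totally_singular_def polar_def by (simp add: vec.subspace_add)

lemma totally_singular_span_singleton:
  "qform c v = 0 \<Longrightarrow> totally_singular c (vec.span {v})"
  unfolding totally_singular_def using vec.subspace_span[of "{v}"]
  by (auto simp: vec.span_singleton qform_scale)

lemma mem_span_insert_subspace:
  assumes "vec.subspace S"
  shows "x \<in> vec.span (insert p S) \<longleftrightarrow> (\<exists>k. x - k *s p \<in> S)"
proof -
  have "vec.span S = S"
    using assms by (simp add: vec.span_eq_iff)
  from vec.span_insert[of p S, unfolded this] show ?thesis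
    by blast
qed

lemma dim_span_insert_subspace:
  assumes "vec.subspace S" "p \<notin> S"
  shows "vec.dim (vec.span (insert p S)) = vec.dim S + 1"
proof -
  have "p \<notin> vec.span S"
    using assms vec.span_eq_iff by blast
  then show ?thesis
    by (simp add: vec.dim_insert)
qed

lemma scale_mem_subspace_iff:
  assumes "vec.subspace S" "a \<noteq> 0"
  shows "a *s x \<in> S \<longleftrightarrow> x \<in> S"
proof
  assume "a *s x \<in> S"
  then have "inverse a *s (a *s x) \<in> S"
    using assms(1) vec.subspace_scale by blast
  with assms(2) show "x \<in> S"
    by (simp add: vec.scale_scale)
qed (use assms(1) vec.subspace_scale in blast)

lemma mem_span_singleton_if_scale_eq:
  assumes "a \<noteq> 0" "a *s y = b *s x"
  shows "y \<in> vec.span {x}"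
proof -
  have "inverse a * a = 1"
    using assms(1) by simp
  then have "y = inverse a *s (a *s y)"
    by (simp only: vec.scale_scale vec.scale_one)
  also have "\<dots> = (inverse a * b) *s x"
    unfolding assms(2) by (simp only: vec.scale_scale)
  finally show ?thesis
    using vec.span_scale[OF vec.span_base[OF singletonI]] by metis
qed

lemma complementary_subspaces_decompose:
  fixes v :: "'a::field^'n"
  assumes A: "vec.subspace A" and B: "vec.subspace B" and AB: "A \<inter> B = {0}"
    and dim: "vec.dim A + vec.dim B = CARD('n)"
  obtains s t where "v = s + t" "s \<in> A" "t \<in> B"
proof -
  let ?S = "{x + y |x y. x \<in> A \<and> y \<in> B}"
  have "vec.dim ?S = CARD('n)"
    using vec.dim_sums_Int[OF A B] AB dim by (simp add: vec.dim_insert)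
  then have "vec.span ?S = UNIV"
    using vec.dim_eq_full[of ?S] by (simp add: card_cart_basis vec.dimension_def)
  moreover have "vec.span ?S = ?S"
    using vec.subspace_sums[OF A B] by (simp only: vec.span_eq_iff)
  ultimately have "v \<in> ?S"
    by (metis UNIV_I)
  with that show ?thesis
    by blast
qed

lemma span_insert_eq_image:
  "vec.span (insert b S) = (\<lambda>(k, s). k *s b + s) ` (UNIV \<times> vec.span S)"
proof
  show "vec.span (insert b S) \<subseteq> (\<lambda>(k, s). k *s b + s) ` (UNIV \<times> vec.span S)"
  proof
    fix x
    assume "x \<in> vec.span (insert b S)"
    then obtain k where "x - k *s b \<in> vec.span S"
      using vec.span_insert by blast
    then show "x \<in> (\<lambda>(k, s). k *s b + s) ` (UNIV \<times> vec.span S)"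
      by (intro image_eqI[of _ _ "(k, x - k *s b)"]) auto
  qed
  have "k *s b + s \<in> vec.span (insert b S)" if "s \<in> vec.span S" for k s
  proof (rule vec.span_add)
    show "k *s b \<in> vec.span (insert b S)"
      using vec.span_scale[OF vec.span_base[OF insertI1]] .
    show "s \<in> vec.span (insert b S)"
      using that vec.span_mono[OF subset_insertI] ..
  qed
  then show "(\<lambda>(k, s). k *s b + s) ` (UNIV \<times> vec.span S) \<subseteq> vec.span (insert b S)"
    by auto
qed

lemma card_span_independent:
  fixes B :: "('a::{field,finite}^'n) set"
  assumes "vec.independent B"
  shows "card (vec.span B) = CARD('a) ^ card B"
  using finite[of B] assms
proof (induction B rule: finite_induct)
  case empty
  then show ?case by simp
next
  case (insert b S)
  then have indep: "vec.independent S" and b: "b \<notin> vec.span S"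
    by (simp_all add: vec.independent_insert)
  have "inj_on (\<lambda>(k, s). k *s b + s) (UNIV \<times> vec.span S)"
  proof (rule inj_onI, clarsimp)
    fix k s k' s'
    assume s: "s \<in> vec.span S" "s' \<in> vec.span S" and eq: "k *s b + s = k' *s b + s'"
    have "(k - k') *s b = s' - s"
      using eq by (simp add: vec_eq_iff algebra_simps)
    then have "(k - k') *s b \<in> vec.span S"
      using vec.span_diff[OF s(2,1)] by simp
    then have "k = k'"
      by (metis b right_minus_eq scale_mem_subspace_iff vec.subspace_span)
    with eq show "k = k' \<and> s = s'"
      by simp
  qed
  then have "card (vec.span (insert b S)) = card ((UNIV::'a set) \<times> vec.span S)"
    unfolding span_insert_eq_image by (rule card_image)
  also have "\<dots> = CARD('a) * CARD('a) ^ card S"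
    using insert.IH indep by (simp add: card_cartesian_product)
  finally show ?case
    using insert.hyps by simp
qed

lemma card_subspace:
  fixes S :: "('a::{field,finite}^'n) set"
  assumes "vec.subspace S"
  shows "card S = CARD('a) ^ vec.dim S"
proof -
  obtain B where "B \<subseteq> S" "vec.independent B" "S \<subseteq> vec.span B" "card B = vec.dim S"
    using vec.basis_exists by blast
  with assms show ?thesis
    using card_span_independent vec.span_minimal by (metis subset_antisym)
qed

lemma card_product_eq:
  fixes c :: "'a::{field,finite}"
  shows "card {(a, b). a * b = c} = CARD('a) - 1 + (if c = 0 then CARD('a) else 0)"
proof (cases "c = 0")
  case True
  have "{(a, b). a * b = c} = {0} \<times> UNIV \<union> (UNIV - {0}) \<times> {0::'a}"
    using True by auto
  moreover have "card ({0::'a} \<times> UNIV \<union> (UNIV - {0}) \<times> {0::'a}) = CARD('a) + (CARD('a) - 1)"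
    by (subst card_Un_disjoint) (auto simp: card_cartesian_product card_Diff_singleton)
  ultimately show ?thesis using True by simp
next
  case False
  have "{(a, b). a * b = c} = (\<lambda>a. (a, c / a)) ` (UNIV - {0})"
    using False by (auto simp: field_simps image_iff)
  moreover have "inj_on (\<lambda>a::'a. (a, c / a)) (UNIV - {0})"
    by (auto intro: inj_onI)
  ultimately show ?thesis
    using False by (simp add: card_image card_Diff_singleton)
qed

section \<open>Counting singular vectors\<close>

definition singular_vectors :: "'a::field^'n^'n \<Rightarrow> ('a^'n) set \<Rightarrow> ('a^'n) set" where
  "singular_vectors c U = {v\<in>U. qform c v = 0}"

definition nondegenerate_on :: "'a::field^'n^'n \<Rightarrow> ('a^'n) set \<Rightarrow> bool" where
  "nondegenerate_on c U \<longleftrightarrow> (\<forall>v\<in>U. qform c v = 0 \<and> (\<forall>w\<in>U. polar c v w = 0) \<longrightarrow> v = 0)"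

definition polar_complement :: "'a::field^'n^'n \<Rightarrow> ('a^'n) set \<Rightarrow> ('a^'n) set \<Rightarrow> ('a^'n) set" where
  "polar_complement c U A = {w\<in>U. \<forall>a\<in>A. polar c a w = 0}"

definition witt_index :: "'a::field^'n^'n \<Rightarrow> ('a^'n) set \<Rightarrow> nat \<Rightarrow> bool" where
  "witt_index c U g \<longleftrightarrow>
     (\<exists>W\<subseteq>U. totally_singular c W \<and> vec.dim W = g) \<and>
     (\<forall>W\<subseteq>U. totally_singular c W \<longrightarrow> vec.dim W \<le> g)"

lemma nondegenerate_on_UNIV: "nondegenerate_on c UNIV \<longleftrightarrow> nondegenerate c"
  unfolding nondegenerate_on_def nondegenerate_def by blast

lemma subspace_polar_complement:
  "vec.subspace U \<Longrightarrow> vec.subspace (polar_complement c U A)"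
  using vec.subspace_inter[OF _ subspace_polar_kernel, of U A c]
  by (simp add: polar_complement_def Int_def conj_commute)

lemma singular_vectors_witt_index_0:
  assumes "vec.subspace U" "witt_index c U 0"
  shows "singular_vectors c U = {0}"
proof -
  have "v = 0" if "v \<in> U" "qform c v = 0" for v
  proof -
    have "vec.span {v} \<subseteq> U"
      using assms(1) that(1) vec.span_minimal by blast
    then have "vec.dim (vec.span {v}) \<le> 0"
      using assms(2) totally_singular_span_singleton[OF that(2)] unfolding witt_index_def by blast
    then show "v = 0"
      by (cases "v = 0") (simp_all add: vec.dim_insert)
  qed
  then show ?thesis
    using assms(1) vec.subspace_0 by (auto simp: singular_vectors_def)
qed

lemma hyperbolic_partner:
  assumes "vec.subspace U" "nondegenerate_on c U" "p \<in> U" "p \<noteq> 0" "qform c p = 0"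
  obtains u where "u \<in> U" "qform c u = 0" "polar c p u = 1"
proof -
  obtain w where w: "w \<in> U" "polar c p w \<noteq> 0"
    using assms(2-5) unfolding nondegenerate_on_def by blast
  define u0 where "u0 = inverse (polar c p w) *s w"
  have u0: "u0 \<in> U" "polar c p u0 = 1"
    using w assms(1) by (auto simp: u0_def vec.subspace_scale polar_scale_right)
  \<comment> \<open>Correcting by a multiple of the singular vector p makes the partner singular.\<close>
  define u where "u = u0 - qform c u0 *s p"
  have "u \<in> U"
    using u0(1) assms(1,3) by (simp add: u_def vec.subspace_diff vec.subspace_scale)
  moreover have "polar c p u = 1"
    using u0(2) assms(5) by (simp add: u_def polar_linear polar_self)
  moreover have "qform c u = 0"
    using u0(2) assms(5) polar_commute[of c u0 p]
    by (simp add: u_def qform_diff qform_scale polar_scale_right)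
  ultimately show ?thesis
    using that by blast
qed

context
  fixes c :: "'a::field^'n^'n" and U :: "('a^'n) set" and p u :: "'a^'n"
  assumes U: "vec.subspace U" and pU: "p \<in> U" and uU: "u \<in> U"
    and singular: "qform c p = 0" "qform c u = 0" and pair: "polar c p u = 1"
begin

lemma bij_betw_hyperbolic_splitting:
  "bij_betw (\<lambda>(a, b, w). a *s p + b *s u + w) (UNIV \<times> UNIV \<times> polar_complement c U {p, u}) U"
proof -
  have pp: "polar c p p = 0" and uu: "polar c u u = 0" and up: "polar c u p = 1"
    using singular pair polar_commute[of c u p] by (simp_all add: polar_self)
  let ?g = "\<lambda>v. (polar c u v, polar c p v, v - polar c u v *s p - polar c p v *s u)"
  show ?thesis
  proof (rule bij_betwI[where g = ?g])
    show "(\<lambda>(a, b, w). a *s p + b *s u + w) \<in> UNIV \<times> UNIV \<times> polar_complement c U {p, u} \<rightarrow> U"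
      using U pU uU by (auto simp: polar_complement_def vec.subspace_add vec.subspace_scale)
    show "?g \<in> U \<rightarrow> UNIV \<times> UNIV \<times> polar_complement c U {p, u}"
      using U pU uU
      by (auto simp: polar_complement_def vec.subspace_diff vec.subspace_scale polar_linear pp uu up pair)
    show "?g ((\<lambda>(a, b, w). a *s p + b *s u + w) x) = x"
      if "x \<in> UNIV \<times> UNIV \<times> polar_complement c U {p, u}" for x
      using that by (auto simp: polar_complement_def polar_linear pp uu up pair)
  qed simp
qed

lemma qform_hyperbolic_splitting:
  assumes "w \<in> polar_complement c U {p, u}"
  shows "qform c (a *s p + b *s u + w) = a * b + qform c w"
  using assms singular pair
  by (simp add: polar_complement_def qform_add qform_scale polar_linear)

lemma nondegenerate_on_polar_complement:
  assumes "nondegenerate_on c U"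
  shows "nondegenerate_on c (polar_complement c U {p, u})"
  unfolding nondegenerate_on_def
proof (intro ballI impI)
  fix v
  assume v: "v \<in> polar_complement c U {p, u}"
    and sing: "qform c v = 0 \<and> (\<forall>w\<in>polar_complement c U {p, u}. polar c v w = 0)"
  have "polar c v x = 0" if "x \<in> U" for x
  proof -
    obtain a b w where "x = a *s p + b *s u + w" "w \<in> polar_complement c U {p, u}"
      using \<open>x \<in> U\<close> bij_betw_hyperbolic_splitting unfolding bij_betw_def by force
    with v sing show ?thesis
      by (simp add: polar_complement_def polar_linear polar_commute[of c v])
  qed
  with assms v sing show "v = 0"
    unfolding nondegenerate_on_def polar_complement_def by blast
qed

end

lemma card_singular_vectors_hyperbolic_splitting:
  fixes c :: "'a::{field,finite}^'n^'n"
  assumes "vec.subspace U" "p \<in> U" "u \<in> U" "qform c p = 0" "qform c u = 0" "polar c p u = 1"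
  shows "card (singular_vectors c U) =
    CARD('a) * card (singular_vectors c (polar_complement c U {p, u}))
      + (CARD('a) - 1) * card (polar_complement c U {p, u})"
proof -
  let ?U' = "polar_complement c U {p, u}"
  let ?\<psi> = "\<lambda>(a, b, w). a *s p + b *s u + w"
  let ?T = "{(a, b, w). w \<in> ?U' \<and> a * b = - qform c w}"
  have bij: "bij_betw ?\<psi> (UNIV \<times> UNIV \<times> ?U') U"
    using bij_betw_hyperbolic_splitting[OF assms] .
  have Q: "qform c (?\<psi> (a, b, w)) = 0 \<longleftrightarrow> a * b = - qform c w" if "w \<in> ?U'" for a b w
    using qform_hyperbolic_splitting[OF assms that] by (simp add: eq_neg_iff_add_eq_0)
  have "singular_vectors c U = ?\<psi> ` ?T"
  proof
    show "singular_vectors c U \<subseteq> ?\<psi> ` ?T"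
    proof
      fix x
      assume x: "x \<in> singular_vectors c U"
      then obtain t where "t \<in> UNIV \<times> UNIV \<times> ?U'" "x = ?\<psi> t"
        using bij unfolding bij_betw_def singular_vectors_def by blast
      with x Q show "x \<in> ?\<psi> ` ?T"
        unfolding singular_vectors_def by force
    qed
    show "?\<psi> ` ?T \<subseteq> singular_vectors c U"
      using bij Q unfolding bij_betw_def singular_vectors_def by force
  qed
  moreover have "inj_on ?\<psi> ?T"
    using bij unfolding bij_betw_def by (rule inj_on_subset[OF conjunct1]) auto
  ultimately have "card (singular_vectors c U) = card ?T"
    by (simp add: card_image)
  also have "\<dots> = card (SIGMA w:?U'. {(a, b). a * b = - qform c w})"
    by (rule bij_betw_same_card[of "\<lambda>(a, b, w). (w, (a, b))"])
      (auto intro!: bij_betwI[where g = "\<lambda>(w, (a, b)). (a, b, w)"])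
  also have "\<dots> = (\<Sum>w\<in>?U'. CARD('a) - 1 + (if qform c w = 0 then CARD('a) else 0))"
    by (simp add: card_SigmaI card_product_eq)
  also have "\<dots> = (CARD('a) - 1) * card ?U' + CARD('a) * card (singular_vectors c ?U')"
    unfolding sum.distrib by (simp add: sum.inter_filter[symmetric] singular_vectors_def)
  finally show ?thesis
    by simp
qed

lemma totally_singular_span_insert:
  assumes W: "totally_singular c W" and p: "qform c p = 0" and perp: "\<forall>w\<in>W. polar c p w = 0"
  shows "totally_singular c (vec.span (insert p W))"
proof -
  have "qform c x = 0" if x: "x \<in> vec.span (insert p W)" for x
  proof -
    obtain k where k: "x - k *s p \<in> W"
      using x W mem_span_insert_subspace unfolding totally_singular_def by blast
    have "qform c x = qform c (k *s p) + qform c (x - k *s p) + polar c (k *s p) (x - k *s p)"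
      using qform_add[of c "k *s p" "x - k *s p"] by simp
    then show ?thesis
      using k W p perp by (simp add: qform_scale polar_scale_left totally_singular_def)
  qed
  then show ?thesis
    unfolding totally_singular_def using vec.subspace_span by blast
qed

lemma dim_le_dim_polar_complement_singleton:
  assumes "vec.subspace W"
  shows "vec.dim W \<le> vec.dim (polar_complement c W {u}) + 1"
proof (cases "\<forall>w\<in>W. polar c u w = 0")
  case True
  then have "polar_complement c W {u} = W"
    by (auto simp: polar_complement_def)
  then show ?thesis
    by simp
next
  case False
  then obtain w1 where w1: "w1 \<in> W" "polar c u w1 \<noteq> 0"
    by blast
  have "W \<subseteq> vec.span (insert w1 (polar_complement c W {u}))"
  proof
    fix w
    assume "w \<in> W"
    then have "w - (polar c u w / polar c u w1) *s w1 \<in> polar_complement c W {u}"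
      using w1 assms by (simp add: polar_complement_def vec.subspace_diff vec.subspace_scale polar_linear)
    then show "w \<in> vec.span (insert w1 (polar_complement c W {u}))"
      using vec.span_insert vec.span_base by blast
  qed
  then have "vec.dim W \<le> vec.dim (insert w1 (polar_complement c W {u}))"
    by (metis vec.dim_span vec.dim_subset)
  also have "\<dots> \<le> vec.dim (polar_complement c W {u}) + 1"
    by (simp add: vec.dim_insert)
  finally show ?thesis .
qed

lemma witt_index_polar_complement:
  assumes U: "vec.subspace U" and witt: "witt_index c U (Suc g)"
    and W: "W \<subseteq> U" "totally_singular c W" "vec.dim W = Suc g" and p: "p \<in> W"
    and u: "u \<in> U" "polar c p u = 1"
  shows "witt_index c (polar_complement c U {p, u}) g"
proof -
  let ?U' = "polar_complement c U {p, u}"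
  have p_perp: "\<forall>w\<in>W. polar c p w = 0"
    using polar_totally_singular[OF W(2) p] by blast
  have upper: "vec.dim W' \<le> g" if W': "W' \<subseteq> ?U'" "totally_singular c W'" for W'
  proof -
    have "p \<notin> W'"
      using W'(1) u(2) polar_commute[of c u p] by (auto simp: polar_complement_def)
    moreover have "totally_singular c (vec.span (insert p W'))"
      using W' p W(2) by (intro totally_singular_span_insert) (auto simp: polar_complement_def totally_singular_def)
    moreover have "vec.span (insert p W') \<subseteq> U"
      using W' p W(1) U by (intro vec.span_minimal) (auto simp: polar_complement_def)
    ultimately have "vec.dim (vec.span (insert p W')) \<le> Suc g"
      using witt unfolding witt_index_def by blast
    moreover have "vec.dim (vec.span (insert p W')) = vec.dim W' + 1"
      using dim_span_insert_subspace \<open>p \<notin> W'\<close> W'(2) unfolding totally_singular_def by blast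
    ultimately show ?thesis
      by simp
  qed
  let ?W0 = "polar_complement c W {u}"
  have "?W0 \<subseteq> ?U'" "totally_singular c ?W0"
    using W p_perp subspace_polar_complement[of W c "{u}"]
    by (auto simp: polar_complement_def totally_singular_def)
  moreover have "g \<le> vec.dim ?W0"
    using dim_le_dim_polar_complement_singleton[of W c u] W(2,3) by (simp add: totally_singular_def)
  ultimately show ?thesis
    using upper unfolding witt_index_def by (metis le_antisym)
qed

text \<open>The count is q^(2g+e-1) + q^g - q^(g+e-1); it is stated without subtraction so that the
  induction stays in nat.\<close>

theorem card_singular_vectors:
  fixes c :: "'a::{field,finite}^'n^'n"
  assumes "vec.subspace U" "nondegenerate_on c U" "witt_index c U g"
    and "card U = CARD('a) ^ (2 * g + e)"
  shows "CARD('a) * card (singular_vectors c U) + CARD('a) ^ (g + e)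
    = CARD('a) ^ (2 * g + e) + CARD('a) ^ (g + 1)"
  using assms
proof (induction g arbitrary: U)
  case 0
  then show ?case
    by (simp add: singular_vectors_witt_index_0)
next
  case (Suc g)
  let ?q = "CARD('a)"
  obtain W where W: "W \<subseteq> U" "totally_singular c W" "vec.dim W = Suc g"
    using Suc.prems(3) unfolding witt_index_def by blast
  have "\<not> W \<subseteq> {0}"
    using W(3) vec.dim_eq_0[of W] by simp
  then obtain p where p: "p \<in> W" "p \<noteq> 0"
    by blast
  have pU: "p \<in> U" and Qp: "qform c p = 0"
    using p W by (auto simp: totally_singular_def)
  obtain u where u: "u \<in> U" "qform c u = 0" "polar c p u = 1"
    using hyperbolic_partner[OF Suc.prems(1,2) pU p(2) Qp] .
  let ?U' = "polar_complement c U {p, u}"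
  have "card U = card ((UNIV :: 'a set) \<times> (UNIV :: 'a set) \<times> ?U')"
    using bij_betw_same_card[OF bij_betw_hyperbolic_splitting[OF Suc.prems(1) pU u(1) Qp u(2,3)]] ..
  then have card_U': "card ?U' = ?q ^ (2 * g + e)"
    using Suc.prems(4) by (simp add: card_cartesian_product power_add power2_eq_square)
  have IH: "?q * card (singular_vectors c ?U') + ?q ^ (g + e) = ?q ^ (2 * g + e) + ?q ^ (g + 1)"
    using Suc.IH[OF subspace_polar_complement[OF Suc.prems(1)]
        nondegenerate_on_polar_complement[OF Suc.prems(1) pU u(1) Qp u(2,3) Suc.prems(2)]
        witt_index_polar_complement[OF Suc.prems(1,3) W p(1) u(1,3)] card_U'] .
  have step: "card (singular_vectors c U) = ?q * card (singular_vectors c ?U') + (?q - 1) * ?q ^ (2 * g + e)"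
    using card_singular_vectors_hyperbolic_splitting[OF Suc.prems(1) pU u(1) Qp u(2,3)] card_U' by simp
  have "?q * card (singular_vectors c U) + ?q ^ (Suc g + e)
      = ?q * (?q * card (singular_vectors c ?U') + ?q ^ (g + e)) + ?q * (?q - 1) * ?q ^ (2 * g + e)"
    unfolding step by (simp add: algebra_simps)
  also have "\<dots> = ?q * ?q ^ (2 * g + e) + ?q * (?q - 1) * ?q ^ (2 * g + e) + ?q * ?q ^ (g + 1)"
    unfolding IH by (simp add: algebra_simps)
  also have "\<dots> = ?q ^ (2 * Suc g + e) + ?q ^ (Suc g + 1)"
    using not0_implies_Suc[of ?q] by (auto simp: algebra_simps)
  finally show ?case .
qed

section \<open>Spreads cover the quadric\<close>

lemma quadric_type_witt_index:
  fixes c :: "'a::field^'n^'n"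
  assumes "quadric_type c e"
  obtains g where "witt_index c UNIV g" "CARD('n) = 2 * g + e"
proof -
  obtain W where W: "generator c W" "2 * vec.dim W = CARD('n) - e"
    using assms unfolding quadric_type_def by blast
  have "e \<le> CARD('n)"
  proof (cases "e = 2")
    case True
    then have "even CARD('n)"
      using assms unfolding quadric_type_def by auto
    with True zero_less_card_finite[where 'a='n] show ?thesis
      by presburger
  qed (use assms zero_less_card_finite[where 'a='n] in \<open>auto simp: quadric_type_def\<close>)
  with W have "witt_index c UNIV (vec.dim W)" "CARD('n) = 2 * vec.dim W + e"
    unfolding witt_index_def generator_def by auto
  then show ?thesis
    using that by blast
qed

lemma spreadD:
  assumes "spread c K S" "i \<in> {1..K}"
  shows "generator c (S i)" "totally_singular c (S i)" "vec.subspace (S i)"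
  using assms unfolding spread_def generator_def totally_singular_def by blast+

lemma dim_generator:
  assumes "witt_index c UNIV g" "generator c W"
  shows "vec.dim W = g"
  using assms unfolding witt_index_def generator_def by (meson le_antisym subset_UNIV)

lemma card_singular_vectors_quadric:
  fixes c :: "'a::{field,finite}^'n^'n"
  assumes nondeg: "nondegenerate c" and witt: "witt_index c UNIV g" and n: "CARD('n) = 2 * g + e"
  shows "card (singular_vectors c UNIV) = (CARD('a) ^ (g + e - 1) + 1) * (CARD('a) ^ g - 1) + 1"
proof -
  let ?q = "CARD('a)"
  define M where "M = ?q ^ (g + e - 1)"
  have "g + e = Suc (g + e - 1)"
    using n zero_less_card_finite[where 'a='n] by linarith
  then have qM: "?q ^ (g + e) = ?q * M"
    unfolding M_def by (metis power_Suc)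
  have "?q * card (singular_vectors c UNIV) + ?q ^ (g + e) = ?q ^ (2 * g + e) + ?q ^ (g + 1)"
    using card_singular_vectors[OF vec.subspace_UNIV _ witt, of e] nondeg n
    by (simp add: nondegenerate_on_UNIV)
  moreover have "?q ^ (2 * g + e) = ?q * M * ?q ^ g"
    using qM power_add[of ?q "g + e" g] by (simp add: mult_2 add_ac)
  ultimately have "?q * (card (singular_vectors c UNIV) + M) = ?q * (M * ?q ^ g + ?q ^ g)"
    using qM by (simp add: algebra_simps)
  then have "card (singular_vectors c UNIV) + M = M * ?q ^ g + ?q ^ g"
    by simp
  moreover obtain m where "?q ^ g = Suc m"
    using not0_implies_Suc[of "?q ^ g"] by auto
  ultimately show ?thesis
    by (simp add: M_def algebra_simps)
qed

lemma spread_covers_singular_vectors: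
  fixes c :: "'a::{field,finite}^'n^'n"
  assumes nondeg: "nondegenerate c" and witt: "witt_index c UNIV g" and n: "CARD('n) = 2 * g + e"
    and spread: "spread c (CARD('a) ^ (g + e - 1) + 1) S"
    and v: "v \<noteq> 0" "qform c v = 0"
  shows "\<exists>i\<in>{1..CARD('a) ^ (g + e - 1) + 1}. v \<in> S i"
proof -
  define K where "K = CARD('a) ^ (g + e - 1) + 1"
  note gen = spreadD(1)[OF spread[folded K_def]] and sub = spreadD(3)[OF spread[folded K_def]]
  have "card (S i - {0}) = CARD('a) ^ g - 1" if "i \<in> {1..K}" for i
    using card_subspace[OF sub[OF that]] dim_generator[OF witt gen[OF that]] vec.subspace_0[OF sub[OF that]]
    by (simp add: card_Diff_singleton)
  moreover have "(S i - {0}) \<inter> (S j - {0}) = {}" if "i \<in> {1..K}" "j \<in> {1..K}" "i \<noteq> j" for i j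
    using spread that unfolding spread_def K_def by blast
  ultimately have "card (\<Union>i\<in>{1..K}. S i - {0}) = K * (CARD('a) ^ g - 1)"
    by (subst card_UN_disjoint) auto
  then have "card (\<Union>i\<in>{1..K}. S i - {0}) = card (singular_vectors c UNIV - {0})"
    using card_singular_vectors_quadric[OF nondeg witt n]
    by (simp add: K_def singular_vectors_def card_Diff_singleton)
  moreover have "(\<Union>i\<in>{1..K}. S i - {0}) \<subseteq> singular_vectors c UNIV - {0}"
    using gen unfolding generator_def totally_singular_def singular_vectors_def by blast
  ultimately have "(\<Union>i\<in>{1..K}. S i - {0}) = singular_vectors c UNIV - {0}"
    by (simp add: card_subset_eq)
  with v show ?thesis
    unfolding K_def singular_vectors_def by blast
qed

section \<open>Projecting generators from a point of the quadric\<close>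

lemma eq_if_line_points_in_subspace:
  assumes "vec.subspace S" "x - a *s p \<in> S" "x - b *s p \<in> S" "p \<notin> S"
  shows "a = b"
proof -
  have "(x - b *s p) - (x - a *s p) = (a - b) *s p"
    by (simp add: vec_eq_iff algebra_simps)
  then have "(a - b) *s p \<in> S"
    using vec.subspace_diff[OF assms(1,3,2)] by simp
  then show ?thesis
    using assms(1,4) scale_mem_subspace_iff[of S "a - b" p] by auto
qed

lemma cone_coordinates_elimination:
  assumes A: "vec.subspace A" and B: "vec.subspace B" and AB: "A \<inter> B = {0}"
    and xa: "x - a *s p \<in> A" and xb: "x - b *s p \<in> B"
    and ya: "y - a' *s p \<in> A" and yb: "y - b' *s p \<in> B"
  shows "(b - a) *s y - (b' - a') *s x = ((b - a) * a' - (b' - a') * a) *s p"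
proof -
  define d where "d = (b - a) *s (y - a' *s p) - (b' - a') *s (x - a *s p)"
  have "d \<in> A"
    unfolding d_def by (intro vec.subspace_diff[OF A] vec.subspace_scale[OF A] xa ya)
  moreover have "d = (b - a) *s (y - b' *s p) - (b' - a') *s (x - b *s p)"
    by (simp add: d_def vec_eq_iff algebra_simps)
  moreover have "(b - a) *s (y - b' *s p) - (b' - a') *s (x - b *s p) \<in> B"
    by (intro vec.subspace_diff[OF B] vec.subspace_scale[OF B] xb yb)
  ultimately have "d \<in> A \<inter> B"
    by simp
  then have "d = 0"
    using AB by blast
  then show ?thesis
    by (simp add: d_def vec_eq_iff algebra_simps)
qed

lemma cone_sections_Int_collinear:
  assumes A: "vec.subspace A" and B: "vec.subspace B" and AB: "A \<inter> B = {0}"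
    and H: "vec.subspace H" "p \<notin> H"
    and x: "x \<in> vec.span (insert p A)" "x \<in> vec.span (insert p B)" "x \<in> H" "x \<noteq> 0"
    and y: "y \<in> vec.span (insert p A)" "y \<in> vec.span (insert p B)" "y \<in> H"
  shows "y \<in> vec.span {x}"
proof -
  obtain a where xa: "x - a *s p \<in> A"
    using x(1) A mem_span_insert_subspace by blast
  obtain b where xb: "x - b *s p \<in> B"
    using x(2) B mem_span_insert_subspace by blast
  obtain a' where ya: "y - a' *s p \<in> A"
    using y(1) A mem_span_insert_subspace by blast
  obtain b' where yb: "y - b' *s p \<in> B"
    using y(2) B mem_span_insert_subspace by blast
  have scale_p: "k = 0" if "k *s p \<in> H" for k
    using that H scale_mem_subspace_iff by blast
  have "b \<noteq> a"
  proof
    assume "b = a"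
    then have "x - a *s p \<in> A \<inter> B"
      using xa xb by simp
    then have "x = a *s p"
      using AB by simp
    moreover from this have "a = 0"
      using x(3) scale_p by simp
    ultimately show False
      using x(4) by simp
  qed
  note eq = cone_coordinates_elimination[OF A B AB xa xb ya yb]
  have "(b - a) *s y - (b' - a') *s x \<in> H"
    by (intro vec.subspace_diff[OF H(1)] vec.subspace_scale[OF H(1)] x(3) y(3))
  then have "(b - a) * a' - (b' - a') * a = 0"
    unfolding eq by (rule scale_p)
  then have "(b - a) *s y = (b' - a') *s x"
    using eq by simp
  moreover have "b - a \<noteq> 0"
    using \<open>b \<noteq> a\<close> by simp
  ultimately show ?thesis
    by (rule mem_span_singleton_if_scale_eq[rotated])
qed

lemma dim_cone_sections_Int_le_1:
  assumes "vec.subspace A" "vec.subspace B" "A \<inter> B = {0}" "vec.subspace H" "p \<notin> H"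
  shows "vec.dim ((vec.span (insert p A) \<inter> H) \<inter> (vec.span (insert p B) \<inter> H)) \<le> 1"
proof (cases "(vec.span (insert p A) \<inter> H) \<inter> (vec.span (insert p B) \<inter> H) \<subseteq> {0}")
  case True
  then show ?thesis
    using vec.dim_eq_0 by (metis le_zero_eq zero_le_one)
next
  case False
  then obtain x where x: "x \<in> (vec.span (insert p A) \<inter> H) \<inter> (vec.span (insert p B) \<inter> H)" "x \<noteq> 0"
    by blast
  then have "(vec.span (insert p A) \<inter> H) \<inter> (vec.span (insert p B) \<inter> H) \<subseteq> vec.span {x}"
    using cone_sections_Int_collinear[OF assms] by blast
  then have "vec.dim ((vec.span (insert p A) \<inter> H) \<inter> (vec.span (insert p B) \<inter> H)) \<le> vec.dim {x}"
    by (metis vec.dim_span vec.dim_subset)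
  also have "\<dots> \<le> 1"
    by (simp add: vec.dim_insert)
  finally show ?thesis .
qed

lemma span_insert_eq_polar_hyperplane:
  fixes c :: "'a::field^'n^'n"
  assumes nondeg: "nondegenerate c" and p: "p \<noteq> 0" "qform c p = 0"
    and H: "vec.subspace H" "H \<subseteq> {x. polar c p x = 0}" "p \<notin> H" "vec.dim H + 2 = CARD('n)"
  shows "vec.span (insert p H) = {x. polar c p x = 0}"
proof (rule vec.subspace_dim_equal)
  let ?P = "{x. polar c p x = 0}"
  show "vec.subspace (vec.span (insert p H))"
    by (rule vec.subspace_span)
  show "vec.subspace ?P"
    using subspace_polar_kernel[of "{p}" c] by simp
  show "vec.span (insert p H) \<subseteq> ?P"
    using H(2) p(2) \<open>vec.subspace ?P\<close> by (intro vec.span_minimal) (auto simp: polar_self)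
  have "?P \<noteq> UNIV"
    using nondeg p unfolding nondegenerate_def by blast
  then have "vec.dim ?P < CARD('n)"
    using vec.subspace_dim_equal[OF \<open>vec.subspace ?P\<close> vec.subspace_UNIV] vec.dim_subset_UNIV[of ?P]
    by (fastforce simp: card_cart_basis vec.dimension_def)
  then show "vec.dim ?P \<le> vec.dim (vec.span (insert p H))"
    using dim_span_insert_subspace[OF H(1,3)] H(4) by simp
qed

lemma cone_sections_Int_nontrivial:
  fixes c :: "'a::field^'n^'n"
  assumes A: "totally_singular c A" and B: "totally_singular c B" and AB: "A \<inter> B = {0}"
    and dim: "vec.dim A + vec.dim B = CARD('n)"
    and p: "qform c p = 0" "p \<notin> A" "p \<notin> B"
    and H: "vec.subspace H" "{x. polar c p x = 0} \<subseteq> vec.span (insert p H)"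
  obtains h where "h \<noteq> 0" "h \<in> (vec.span (insert p A) \<inter> H) \<inter> (vec.span (insert p B) \<inter> H)"
proof -
  have As: "vec.subspace A" and Bs: "vec.subspace B"
    using A B by (simp_all add: totally_singular_def)
  obtain s t where st: "p = s + t" "s \<in> A" "t \<in> B"
    using complementary_subspaces_decompose[OF As Bs AB dim] .
  have "polar c s t = 0"
    using p(1) st A B by (simp add: qform_add totally_singular_def)
  then have "polar c p s = 0"
    using st A by (simp add: polar_add_left polar_self polar_commute[of c t s] totally_singular_def)
  then obtain k where k: "s - k *s p \<in> H"
    using H mem_span_insert_subspace by blast
  define h where "h = s - k *s p"
  have "h - (- k) *s p \<in> A"
    using st by (simp add: h_def)
  moreover have "h - (1 - k) *s p = - t"
    using st(1) by (simp add: h_def vec_eq_iff algebra_simps)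
  then have "h - (1 - k) *s p \<in> B"
    using vec.subspace_neg[OF Bs st(3)] by simp
  moreover have "h \<noteq> 0"
  proof
    assume "h = 0"
    then have "s = k *s p"
      by (simp add: h_def)
    then show False
      using st p(2,3) scale_mem_subspace_iff[OF As, of k p] by (cases "k = 0") auto
  qed
  ultimately show ?thesis
    using that k As Bs mem_span_insert_subspace unfolding h_def by blast
qed

lemma dim_cone_sections_Int_eq_1:
  fixes c :: "'a::field^'n^'n"
  assumes nondeg: "nondegenerate c"
    and A: "totally_singular c A" and B: "totally_singular c B" and AB: "A \<inter> B = {0}"
    and dims: "vec.dim A + vec.dim B = CARD('n)"
    and p: "p \<noteq> 0" "qform c p = 0" "p \<notin> A" "p \<notin> B"
    and H: "vec.subspace H" "H \<subseteq> {x. polar c p x = 0}" "p \<notin> H" "vec.dim H + 2 = CARD('n)"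
  shows "vec.dim ((vec.span (insert p A) \<inter> H) \<inter> (vec.span (insert p B) \<inter> H)) = 1"
proof -
  obtain h where "h \<noteq> 0" "h \<in> (vec.span (insert p A) \<inter> H) \<inter> (vec.span (insert p B) \<inter> H)"
    using cone_sections_Int_nontrivial[OF A B AB dims p(2-4) H(1)
        equalityD2[OF span_insert_eq_polar_hyperplane[OF nondeg p(1,2) H]]] .
  then have "vec.dim {h} \<le> vec.dim ((vec.span (insert p A) \<inter> H) \<inter> (vec.span (insert p B) \<inter> H))"
    by (intro vec.dim_subset) auto
  moreover have "vec.dim ((vec.span (insert p A) \<inter> H) \<inter> (vec.span (insert p B) \<inter> H)) \<le> 1"
    using dim_cone_sections_Int_le_1 A B AB H(1,3) unfolding totally_singular_def by blast
  ultimately show ?thesis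
    using \<open>h \<noteq> 0\<close> by (simp add: vec.dim_insert)
qed

lemma ex1_spread_member_containing_line_point:
  fixes S :: "'i \<Rightarrow> ('a::field^'n) set"
  assumes sub: "\<And>i. i \<in> I \<Longrightarrow> vec.subspace (S i)"
    and disjoint: "\<And>i j. i \<in> I \<Longrightarrow> j \<in> I \<Longrightarrow> i \<noteq> j \<Longrightarrow> S i \<inter> S j = {0}"
    and cover: "\<And>v. v \<noteq> 0 \<Longrightarrow> qform c v = 0 \<Longrightarrow> \<exists>i\<in>I. v \<in> S i"
    and k: "k \<in> I" "p \<in> S k" "qform c p = 0"
    and x: "qform c x = 0" "polar c p x = 0" "x \<notin> S k"
  shows "\<exists>!i. i \<in> I - {k} \<and> x - a *s p \<in> S i"
proof -
  have notin: "x - a *s p \<notin> S k"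
  proof
    assume "x - a *s p \<in> S k"
    then have "(x - a *s p) + a *s p \<in> S k"
      using sub[OF k(1)] k(2) vec.subspace_add vec.subspace_scale by blast
    with x(3) show False
      by simp
  qed
  then have nonzero: "x - a *s p \<noteq> 0"
    using vec.subspace_0[OF sub[OF k(1)]] by auto
  have "qform c (x - a *s p) = 0"
    using x k(3) polar_commute[of c x p] by (simp add: qform_diff qform_scale polar_scale_right)
  then obtain i where i: "i \<in> I" "x - a *s p \<in> S i"
    using cover[OF nonzero] by blast
  have "j = i" if "j \<in> I - {k}" "x - a *s p \<in> S j" for j
  proof (rule ccontr)
    assume "j \<noteq> i"
    then have "S j \<inter> S i = {0}"
      using disjoint that(1) i(1) by blast
    with that(2) i(2) nonzero show False
      by blast
  qed
  moreover have "i \<noteq> k"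
    using i(2) notin by auto
  ultimately show ?thesis
    using i by blast
qed

lemma card_spread_members_meeting_line:
  fixes S :: "'i \<Rightarrow> ('a::{field,finite}^'n) set"
  assumes sub: "\<And>i. i \<in> I \<Longrightarrow> vec.subspace (S i)"
    and disjoint: "\<And>i j. i \<in> I \<Longrightarrow> j \<in> I \<Longrightarrow> i \<noteq> j \<Longrightarrow> S i \<inter> S j = {0}"
    and cover: "\<And>v. v \<noteq> 0 \<Longrightarrow> qform c v = 0 \<Longrightarrow> \<exists>i\<in>I. v \<in> S i"
    and k: "k \<in> I" "p \<in> S k" "p \<noteq> 0" "qform c p = 0"
    and x: "qform c x = 0" "polar c p x = 0" "x \<notin> S k"
  shows "card {i \<in> I - {k}. x \<in> vec.span (insert p (S i))} = CARD('a)"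
proof -
  have p_notin: "p \<notin> S i" if "i \<in> I - {k}" for i
    using that k disjoint by blast
  have ex1: "\<exists>!i. i \<in> I - {k} \<and> x - a *s p \<in> S i" for a
    using ex1_spread_member_containing_line_point[OF sub disjoint cover k(1,2,4) x] by blast
  define f where "f a = (THE i. i \<in> I - {k} \<and> x - a *s p \<in> S i)" for a
  have f: "f a \<in> I - {k}" "x - a *s p \<in> S (f a)" for a
    using theI'[OF ex1[of a]] unfolding f_def by blast+
  have "inj f"
  proof (rule injI)
    fix a b
    assume fab: "f a = f b"
    have "f a \<in> I" "p \<notin> S (f a)"
      using f(1) p_notin by auto
    then show "a = b"
      using eq_if_line_points_in_subspace[OF sub f(2)[of a] f(2)[of b, folded fab]] by blast
  qed
  have "f ` UNIV = {i \<in> I - {k}. x \<in> vec.span (insert p (S i))}"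
  proof (intro equalityI subsetI)
    fix i
    assume "i \<in> f ` UNIV"
    then obtain a where "i = f a"
      by blast
    then show "i \<in> {i \<in> I - {k}. x \<in> vec.span (insert p (S i))}"
      using f[of a] sub mem_span_insert_subspace by blast
  next
    fix i
    assume i: "i \<in> {i \<in> I - {k}. x \<in> vec.span (insert p (S i))}"
    then obtain a where "x - a *s p \<in> S i"
      using sub mem_span_insert_subspace by blast
    then have "f a = i"
      using ex1[of a] f[of a] i by blast
    then show "i \<in> f ` UNIV"
      by blast
  qed
  with card_image[OF \<open>inj f\<close>] show ?thesis
    by simp
qed

theorem mainTheorem3:
  fixes c :: "'a::{field,finite}^'n^'n"
    and r e N :: nat
    and Sg :: "nat \<Rightarrow> ('a^'n) set"
    and p :: "'a^'n"
    and H :: "('a^'n) set"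
    and Pis :: "nat \<Rightarrow> ('a^'n) set"
  assumes dimn: "CARD('n) = r + 3"
    and e: "e \<in> {0,1,2}"
    and par: "(e \<in> {0,2} \<longrightarrow> odd r) \<and> (e = 1 \<longrightarrow> even r)"
    and quad: "quadric_type c e"
    and N_def: "N = CARD('a) ^ ((r + e + 1) div 2)"
    and spr: "spread c (N + 1) Sg"
    and P: "p \<noteq> 0" "p \<in> Sg (N + 1)"
    and H: "vec.subspace H" "vec.dim H = r + 1"
           "H \<subseteq> {x. polar c p x = 0}" "p \<notin> H"
    and Pi_def: "\<And>i. Pis i = vec.span (insert p (Sg i)) \<inter> H"
  shows "(e \<in> {1,2} \<longrightarrow>
            (\<forall>i\<in>{1..N}. \<forall>j\<in>{1..N}. i \<noteq> j \<longrightarrow> vec.dim (Pis i \<inter> Pis j) \<le> 1))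
       \<and> (e = 0 \<and> r mod 4 = 1 \<longrightarrow>
            (\<forall>i\<in>{1..N}. \<forall>j\<in>{1..N}. i \<noteq> j \<longrightarrow> vec.dim (Pis i \<inter> Pis j) = 1))
       \<and> (\<forall>x. x \<noteq> 0 \<and> x \<in> H \<and> qform c x = 0 \<and> x \<notin> Sg (N + 1) \<longrightarrow>
            card {i\<in>{1..N}. x \<in> Pis i} = CARD('a))"
proof -
  obtain g where witt: "witt_index c UNIV g" and n: "CARD('n) = 2 * g + e"
    using quadric_type_witt_index[OF quad] .
  have nondeg: "nondegenerate c"
    using quad unfolding quadric_type_def by blast
  have "(r + e + 1) div 2 = g + e - 1"
    using dimn n by presburger
  then have "N = CARD('a) ^ (g + e - 1)"
    using N_def by simp
  then have cover: "\<exists>i\<in>{1..N + 1}. v \<in> Sg i" if "v \<noteq> 0" "qform c v = 0" for v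
    using spread_covers_singular_vectors[OF nondeg witt n _ that] spr by simp
  note gen = spreadD(1)[OF spr] and ts = spreadD(2)[OF spr] and sub = spreadD(3)[OF spr]
  have disj: "Sg i \<inter> Sg j = {0}" if "i \<in> {1..N + 1}" "j \<in> {1..N + 1}" "i \<noteq> j" for i j
    using spr that unfolding spread_def by blast
  have Qp: "qform c p = 0"
    using ts[of "N + 1"] P(2) unfolding totally_singular_def by simp
  have p_notin: "p \<notin> Sg i" if "i \<in> {1..N}" for i
    using disj[of i "N + 1"] that P by auto
  have dim_le_1: "vec.dim (Pis i \<inter> Pis j) \<le> 1" if "i \<in> {1..N}" "j \<in> {1..N}" "i \<noteq> j" for i j
    unfolding Pi_def using that by (intro dim_cone_sections_Int_le_1 sub disj H(1,4)) auto
  have dim_eq_1: "vec.dim (Pis i \<inter> Pis j) = 1"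
    if e0: "e = 0" and ij: "i \<in> {1..N}" "j \<in> {1..N}" "i \<noteq> j" for i j
  proof -
    have ij': "i \<in> {1..N + 1}" "j \<in> {1..N + 1}"
      using ij by auto
    have "vec.dim (Sg i) + vec.dim (Sg j) = CARD('n)"
      using dim_generator[OF witt gen[OF ij'(1)]] dim_generator[OF witt gen[OF ij'(2)]] e0 n by simp
    moreover have "vec.dim H + 2 = CARD('n)"
      using dimn H(2) by simp
    ultimately show ?thesis
      unfolding Pi_def
      by (rule dim_cone_sections_Int_eq_1[OF nondeg ts[OF ij'(1)] ts[OF ij'(2)] disj[OF ij' ij(3)] _
            P(1) Qp p_notin[OF ij(1)] p_notin[OF ij(2)] H(1,3,4)])
  qed
  have card_lines: "card {i \<in> {1..N}. x \<in> Pis i} = CARD('a)"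
    if x: "x \<noteq> 0" "x \<in> H" "qform c x = 0" "x \<notin> Sg (N + 1)" for x
  proof -
    have "polar c p x = 0" "N + 1 \<in> {1..N + 1}"
      using H(3) x(2) by auto
    have "{1..N} = {1..N + 1} - {N + 1}"
      by auto
    then have "{i \<in> {1..N}. x \<in> Pis i} = {i \<in> {1..N + 1} - {N + 1}. x \<in> vec.span (insert p (Sg i))}"
      using x(2) unfolding Pi_def by blast
    also have "card \<dots> = CARD('a)"
      by (rule card_spread_members_meeting_line[OF sub disj cover \<open>N + 1 \<in> {1..N + 1}\<close> P(2,1) Qp
            x(3) \<open>polar c p x = 0\<close> x(4)])
    finally show ?thesis .
  qed
  show ?thesis
    using dim_le_1 dim_eq_1 card_lines by blast
qed

end
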